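(* In the setting described in the context, apply to the phase space variables $(P,Q)=(p_1,p_2,p_3,q_1,q_2,q_3)\in(\mathbb{R}^2)^6$ of the charged three-body problem the following successive changes of variables: (1) $P=\mathcal A^{-T}Y$, $Q=\mathcal AX$ with $Y=(G,Z,W)$, $X=(g,z,w)$; (2) set $G=g=0$ and rotate: $\tilde z=R(\theta(t))^Tz$, $\tilde Z=R(\theta(t))^TZ$, $\tilde w=R(\theta(t))^Tw$, $\tilde W=R(\theta(t))^TW$; (3) $\hat z=\tilde z/r(t)$, $\hat Z=r(t)\tilde Z-\dot r(t)\tilde z$, $\hat w=\tilde w/r(t)$, $\hat W=r(t)\tilde W-\dot r(t)\tilde w$; (4) replace the time $t$ by the true anomaly $\theta$ as independent variable; (5) $\bar z=\sigma\hat z$, $\bar Z=\sigma^{-1}\hat Z$, $\bar w=\sigma\hat w$, $\bar W=\sigma^{-1}\hat W$. Then the elliptic triangle solution $Q(t)=(r(t)R(\theta(t))a_1,r(t)R(\theta(t))a_2,r(t)R(\theta(t))a_3)^T$, $P(t)=M\dot Q(t)$, is transformed to the solution, with $G\equiv g\equiv0$, of the Hamiltonian system with Hamiltonian $H$ given by $$(\bar Z(\theta),\bar W(\theta))=(0,\sigma,0,0),\qquad (\bar z(\theta),\bar w(\theta))=(\sigma,0,0,0).$$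
   Context: Setting: masses $m_1,m_2,m_3>0$ with $m_1+m_2+m_3=1$, charges $e_i\in\mathbb{R}$, $\delta_{ij}=1-\frac{e_ie_j}{m_im_j}>0$, with $\delta_{ij}^{1/3}+\delta_{jk}^{1/3}>\delta_{ki}^{1/3}$ for cyclic $(i,j,k)$. $M={\rm diag}(m_1I_2,m_2I_2,m_3I_2)$. Let $\theta_1,\theta_2,\theta_3$ be the inner angles of a non-collinear central configuration of the charged problem (so $\sin\theta_1:\sin\theta_2:\sin\theta_3=\delta_{23}^{1/3}:\delta_{31}^{1/3}:\delta_{12}^{1/3}$), $\alpha=\sqrt{m_2m_3\sin^2\theta_1+m_3m_1\sin^2\theta_2+m_1m_2\sin^2\theta_3}$, and $a_1=\frac1\alpha(m_2\cos\theta_2\sin\theta_3-m_3\sin\theta_2\cos\theta_3,\ (m_2+m_3)\sin\theta_2\sin\theta_3)^T$, $a_2=\frac1\alpha(-m_1\cos\theta_2\sin\theta_3-m_3\sin(\theta_2+\theta_3),\ -m_1\sin\theta_2\sin\theta_3)^T$, $a_3=\frac1\alpha(m_2\sin(\theta_2+\theta_3)+m_1\sin\theta_2\cos\theta_3,\ -m_1\sin\theta_2\sin\theta_3)^T$ (this configuration has center of mass $0$ and $\sum m_i|a_i|^2=1$). $J=\begin{pmatrix}0&-1\\1&0\end{pmatrix}$, $R(\varphi)$ rotation by $\varphi$. $A_i=(a_i,Ja_i)$ ($2\times2$), $\rho_i=\sqrt{m_1m_2m_3}/m_i$, $B_1=\frac{\rho_1\sin\theta_1}{\alpha}I$, $B_2=-\frac{\rho_2\sin\theta_2}{\alpha}R(\theta_3)$,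 $B_3=-\frac{\rho_3\sin\theta_3}{\alpha}R(-\theta_2)$, and $\mathcal A$ is the $6\times6$ matrix with block rows $(I,A_i,B_i)$, $i=1,2,3$ (it satisfies $\mathcal A^TM\mathcal A=I$). $\mu=\sum_{i<j}m_im_j\delta_{ij}/|a_i-a_j|$. $z(t)=r(t)(\cos\theta(t),\sin\theta(t))$ is an elliptic Kepler orbit of $\ddot z=-\mu z/|z|^3$ with eccentricity $e\in[0,1)$ and parameter $p>0$, so that in terms of the true anomaly $r(\theta)=p/(1+e\cos\theta)$; $\sigma=(\mu p)^{1/4}$. $U(z,w)=\sum_{i<j}\frac{m_im_j\delta_{ij}}{|(A_i-A_j)z+(B_i-B_j)w|}$ for $z,w\in\mathbb{R}^2$, and $$H(\theta,\bar Z,\bar W,\bar z,\bar w)=\tfrac12(|\bar Z|^2+|\bar W|^2)+(\bar z\cdot J\bar Z+\bar w\cdot J\bar W)+\frac{p-r(\theta)}{2p}(|\bar z|^2+|\bar w|^2)-\frac{r(\theta)}{(\mu p)^{1/4}}U(\bar z,\bar w).$$ *)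

theory Defs
  imports "HOL-Analysis.Analysis"
begin

text \<open>Planar vectors are elements of real^2 (components 1 and 2); 2x2 matrices are
  real^2^2, built row by row.  Bodies are indexed by the naturals 1, 2, 3.\<close>

definition vec2 :: "real \<Rightarrow> real \<Rightarrow> real^2" where
  "vec2 x y = vector [x, y]"

definition mat2 :: "real \<Rightarrow> real \<Rightarrow> real \<Rightarrow> real \<Rightarrow> real^2^2" where
  "mat2 a b c d = vector [vector [a, b], vector [c, d]]"

definition rot :: "real \<Rightarrow> real^2^2" where
  "rot phi = mat2 (cos phi) (- sin phi) (sin phi) (cos phi)"

definition Jm :: "real^2^2" where
  "Jm = mat2 0 (-1) 1 0"

definition cols2 :: "real^2 \<Rightarrow> real^2 \<Rightarrow> real^2^2" where
  "cols2 u v = mat2 (u$1) (v$1) (u$2) (v$2)"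

definition delta :: "(nat \<Rightarrow> real) \<Rightarrow> (nat \<Rightarrow> real) \<Rightarrow> nat \<Rightarrow> nat \<Rightarrow> real" where
  "delta m q i j = 1 - q i * q j / (m i * m j)"

definition alpha :: "(nat \<Rightarrow> real) \<Rightarrow> real \<Rightarrow> real \<Rightarrow> real \<Rightarrow> real" where
  "alpha m t1 t2 t3 = sqrt (m 2 * m 3 * (sin t1)^2 + m 3 * m 1 * (sin t2)^2 + m 1 * m 2 * (sin t3)^2)"

definition avec :: "(nat \<Rightarrow> real) \<Rightarrow> real \<Rightarrow> real \<Rightarrow> real \<Rightarrow> nat \<Rightarrow> real^2" where
  "avec m t1 t2 t3 i =
     (1 / alpha m t1 t2 t3) *\<^sub>R
     (if i = 1 then vec2 (m 2 * cos t2 * sin t3 - m 3 * sin t2 * cos t3) ((m 2 + m 3) * sin t2 * sin t3)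
      else if i = 2 then vec2 (- m 1 * cos t2 * sin t3 - m 3 * sin (t2 + t3)) (- m 1 * sin t2 * sin t3)
      else vec2 (m 2 * sin (t2 + t3) + m 1 * sin t2 * cos t3) (- m 1 * sin t2 * sin t3))"

definition Amat :: "(nat \<Rightarrow> real) \<Rightarrow> real \<Rightarrow> real \<Rightarrow> real \<Rightarrow> nat \<Rightarrow> real^2^2" where
  "Amat m t1 t2 t3 i = cols2 (avec m t1 t2 t3 i) (Jm *v avec m t1 t2 t3 i)"

definition rho :: "(nat \<Rightarrow> real) \<Rightarrow> nat \<Rightarrow> real" where
  "rho m i = sqrt (m 1 * m 2 * m 3) / m i"

definition Bmat :: "(nat \<Rightarrow> real) \<Rightarrow> real \<Rightarrow> real \<Rightarrow> real \<Rightarrow> nat \<Rightarrow> real^2^2" where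
  "Bmat m t1 t2 t3 i =
     (if i = 1 then (rho m 1 * sin t1 / alpha m t1 t2 t3) *\<^sub>R mat 1
      else if i = 2 then (- (rho m 2 * sin t2 / alpha m t1 t2 t3)) *\<^sub>R rot t3
      else (- (rho m 3 * sin t3 / alpha m t1 t2 t3)) *\<^sub>R rot (- t2))"

text \<open>Block row i of the product calA * X, for X = (g, z, w).\<close>
definition calA_act :: "(nat \<Rightarrow> real) \<Rightarrow> real \<Rightarrow> real \<Rightarrow> real \<Rightarrow> real^2 \<Rightarrow> real^2 \<Rightarrow> real^2 \<Rightarrow> nat \<Rightarrow> real^2" where
  "calA_act m t1 t2 t3 g z w i = g + Amat m t1 t2 t3 i *v z + Bmat m t1 t2 t3 i *v w"

text \<open>calA^T * P for P = (p_1, p_2, p_3); P = calA^(-T) Y is equivalent to Y = calA^T P.\<close>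
definition calAT_act :: "(nat \<Rightarrow> real) \<Rightarrow> real \<Rightarrow> real \<Rightarrow> real \<Rightarrow> (nat \<Rightarrow> real^2) \<Rightarrow> (real^2) \<times> (real^2) \<times> (real^2)" where
  "calAT_act m t1 t2 t3 P =
     ((\<Sum>i\<in>{1,2,3}. P i),
      (\<Sum>i\<in>{1,2,3}. transpose (Amat m t1 t2 t3 i) *v P i),
      (\<Sum>i\<in>{1,2,3}. transpose (Bmat m t1 t2 t3 i) *v P i))"

definition mu :: "(nat \<Rightarrow> real) \<Rightarrow> (nat \<Rightarrow> real) \<Rightarrow> real \<Rightarrow> real \<Rightarrow> real \<Rightarrow> real" where
  "mu m q t1 t2 t3 =
     (\<Sum>(i,j)\<in>{(1,2),(1,3),(2,3)}. m i * m j * delta m q i j / norm (avec m t1 t2 t3 i - avec m t1 t2 t3 j))"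

definition Upot :: "(nat \<Rightarrow> real) \<Rightarrow> (nat \<Rightarrow> real) \<Rightarrow> real \<Rightarrow> real \<Rightarrow> real \<Rightarrow> real^2 \<Rightarrow> real^2 \<Rightarrow> real" where
  "Upot m q t1 t2 t3 z w =
     (\<Sum>(i,j)\<in>{(1,2),(1,3),(2,3)}. m i * m j * delta m q i j /
        norm ((Amat m t1 t2 t3 i - Amat m t1 t2 t3 j) *v z + (Bmat m t1 t2 t3 i - Bmat m t1 t2 t3 j) *v w))"

definition rtrue :: "real \<Rightarrow> real \<Rightarrow> real \<Rightarrow> real" where
  "rtrue p e th = p / (1 + e * cos th)"

definition sigma :: "(nat \<Rightarrow> real) \<Rightarrow> (nat \<Rightarrow> real) \<Rightarrow> real \<Rightarrow> real \<Rightarrow> real \<Rightarrow> real \<Rightarrow> real" where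
  "sigma m q t1 t2 t3 p = (mu m q t1 t2 t3 * p) powr (1/4)"

definition Ham :: "(nat \<Rightarrow> real) \<Rightarrow> (nat \<Rightarrow> real) \<Rightarrow> real \<Rightarrow> real \<Rightarrow> real \<Rightarrow> real \<Rightarrow> real \<Rightarrow>
                   real \<Rightarrow> real^2 \<Rightarrow> real^2 \<Rightarrow> real^2 \<Rightarrow> real^2 \<Rightarrow> real" where
  "Ham m q t1 t2 t3 p e th Zb Wb zb wb =
     (1/2) * ((norm Zb)^2 + (norm Wb)^2) + (zb \<bullet> (Jm *v Zb) + wb \<bullet> (Jm *v Wb))
     + (p - rtrue p e th) / (2 * p) * ((norm zb)^2 + (norm wb)^2)
     - rtrue p e th / sigma m q t1 t2 t3 p * Upot m q t1 t2 t3 zb wb"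

text \<open>A curve (Zb, Wb, zb, wb) (independent variable theta) solves Hamilton's equations
  for a time-dependent Hamiltonian H(theta, Z, W, z, w), where z, w are the positions and
  Z, W the conjugate momenta:  z' = dH/dZ, w' = dH/dW, Z' = - dH/dz, W' = - dH/dw.\<close>
definition hamiltonian_solution ::
  "(real \<Rightarrow> real^2 \<Rightarrow> real^2 \<Rightarrow> real^2 \<Rightarrow> real^2 \<Rightarrow> real) \<Rightarrow>
   (real \<Rightarrow> real^2) \<Rightarrow> (real \<Rightarrow> real^2) \<Rightarrow> (real \<Rightarrow> real^2) \<Rightarrow> (real \<Rightarrow> real^2) \<Rightarrow> bool" where
  "hamiltonian_solution H Zc Wc zc wc \<longleftrightarrow>
     (\<forall>th. \<exists>dZ dW dz dw.
        (Zc has_vector_derivative dZ) (at th) \<and> (Wc has_vector_derivative dW) (at th) \<and>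
        (zc has_vector_derivative dz) (at th) \<and> (wc has_vector_derivative dw) (at th) \<and>
        ((\<lambda>Z. H th Z (Wc th) (zc th) (wc th)) has_derivative (\<lambda>v. dz \<bullet> v)) (at (Zc th)) \<and>
        ((\<lambda>W. H th (Zc th) W (zc th) (wc th)) has_derivative (\<lambda>v. dw \<bullet> v)) (at (Wc th)) \<and>
        ((\<lambda>z. H th (Zc th) (Wc th) z (wc th)) has_derivative (\<lambda>v. - (dZ \<bullet> v))) (at (zc th)) \<and>
        ((\<lambda>w. H th (Zc th) (Wc th) (zc th) w) has_derivative (\<lambda>v. - (dW \<bullet> v))) (at (wc th)))"

definition Qtri :: "(nat \<Rightarrow> real) \<Rightarrow> real \<Rightarrow> real \<Rightarrow> real \<Rightarrow> (real \<Rightarrow> real) \<Rightarrow> (real \<Rightarrow> real) \<Rightarrow> nat \<Rightarrow> real \<Rightarrow> real^2" where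
  "Qtri m t1 t2 t3 r ang i t = r t *\<^sub>R (rot (ang t) *v avec m t1 t2 t3 i)"

definition Ptri :: "(nat \<Rightarrow> real) \<Rightarrow> real \<Rightarrow> real \<Rightarrow> real \<Rightarrow> (real \<Rightarrow> real) \<Rightarrow> (real \<Rightarrow> real) \<Rightarrow> nat \<Rightarrow> real \<Rightarrow> real^2" where
  "Ptri m t1 t2 t3 r ang i t = m i *\<^sub>R vector_derivative (Qtri m t1 t2 t3 r ang i) (at t)"

end

theory Submission
  imports Defs
begin

text \<open>Identify the plane with the complex numbers. Then A_i acts as multiplication by a_i and
  B_i as multiplication by a complex number b_i, and the normalisation of the central
  configuration says that 1, (a_i) and (b_i) are orthonormal for the mass-weighted Hermitian
  product on C^3. Hence the triangle solution has coordinates g = 0, z = r e^(i theta), w = 0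
  and momenta G = 0, Z = z', W = 0; rotating back by theta and rescaling by r turns z into
  the constant r and r Z - r' z into i times the angular momentum, which for a Kepler conic
  equals sigma^2. That this constant point solves the Hamiltonian system rests on two facts:
  by the sine law delta_ij is proportional to |a_i - a_j|^3, so U(z, 0) = mu / |z| and the
  z-equation is the Kepler equilibrium; and the w-gradient of U vanishes at w = 0 because
  Lagrange's identity turns sum m_i m_j conj(a_i - a_j)(b_i - b_j) into the orthogonality of
  (a_i) and (b_i).\<close>

section \<open>Planar vectors as complex numbers\<close>

lemma vec2_nth [simp]: "vec2 a b $ 1 = a" "vec2 a b $ 2 = b"
  by (simp_all add: vec2_def)

lemma mat2_mult_vec_nth [simp]:
  "(mat2 a b c d *v x) $ 1 = a * x$1 + b * x$2"
  "(mat2 a b c d *v x) $ 2 = c * x$1 + d * x$2"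
  by (simp_all add: mat2_def matrix_vector_mult_def sum_2)

lemma transpose_mat2 [simp]: "transpose (mat2 a b c d) = mat2 a c b d"
  by (simp add: mat2_def transpose_def vec_eq_iff forall_2)

lemma inner_vec2: "(x::real^2) \<bullet> y = x$1 * y$1 + x$2 * y$2"
  by (simp add: inner_vec_def sum_2)

definition cvec :: "real^2 \<Rightarrow> complex" where
  "cvec x = Complex (x$1) (x$2)"

definition cross2 :: "real^2 \<Rightarrow> real^2 \<Rightarrow> real" where
  "cross2 x y = x$1 * y$2 - x$2 * y$1"

lemma cvec_eq_iff: "cvec x = cvec y \<longleftrightarrow> x = y"
  by (simp add: cvec_def complex_eq_iff vec_eq_iff forall_2)

lemma cvec_simps [simp]:
  "cvec 0 = 0" "cvec (x + y) = cvec x + cvec y" "cvec (x - y) = cvec x - cvec y"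
  "cvec (c *\<^sub>R x) = of_real c * cvec x" "cvec (vec2 a b) = Complex a b"
  by (simp_all add: cvec_def complex_eq_iff)

lemma cvec_sum: "cvec (sum f A) = (\<Sum>x\<in>A. cvec (f x))"
  by (induction A rule: infinite_finite_induct) simp_all

lemma norm_cvec: "cmod (cvec x) = norm x"
  by (simp add: cvec_def cmod_def norm_vec_def L2_set_def sum_2)

lemma inner_cvec: "x \<bullet> y = Re (cnj (cvec x) * cvec y)"
  by (simp add: cvec_def inner_vec_def sum_2)

lemma cross2_cvec: "cross2 x y = Im (cnj (cvec x) * cvec y)"
  by (simp add: cross2_def cvec_def)

lemma cvec_rot: "cvec (rot \<phi> *v x) = cis \<phi> * cvec x"
  and cvec_transpose_rot: "cvec (transpose (rot \<phi>) *v x) = cnj (cis \<phi>) * cvec x"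
  by (simp_all add: rot_def cvec_def complex_eq_iff)

lemma cvec_scaleR_matrix: "cvec ((c *\<^sub>R M) *v x) = of_real c * cvec (M *v x)"
  by (simp add: scaleR_matrix_vector_assoc[symmetric])

lemma has_real_derivative_component:
  fixes f :: "real \<Rightarrow> real^2"
  assumes "(f has_vector_derivative f') (at t)"
  shows "((\<lambda>t. f t $ k) has_real_derivative f' $ k) (at t)"
  using bounded_linear.has_vector_derivative[OF bounded_linear_vec_nth assms, of k]
  by (simp add: has_real_derivative_iff_has_vector_derivative)

lemma has_derivative_matrix_vector_mult: "((\<lambda>x. (M::real^2^2) *v x) has_derivative (\<lambda>v. M *v v)) F"
  by (rule bounded_linear_imp_has_derivative) simp

definition bcoef :: "(nat \<Rightarrow> real) \<Rightarrow> real \<Rightarrow> real \<Rightarrow> real \<Rightarrow> nat \<Rightarrow> complex" where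
  "bcoef m t1 t2 t3 i =
     (if i = 1 then complex_of_real (rho m 1 * sin t1 / alpha m t1 t2 t3)
      else if i = 2 then - complex_of_real (rho m 2 * sin t2 / alpha m t1 t2 t3) * cis t3
      else - complex_of_real (rho m 3 * sin t3 / alpha m t1 t2 t3) * cis (- t2))"

lemma cvec_Amat: "cvec (Amat m t1 t2 t3 i *v x) = cvec (avec m t1 t2 t3 i) * cvec x"
  and cvec_transpose_Amat:
    "cvec (transpose (Amat m t1 t2 t3 i) *v x) = cnj (cvec (avec m t1 t2 t3 i)) * cvec x"
  by (simp_all add: Amat_def cols2_def Jm_def cvec_def complex_eq_iff algebra_simps)

lemma cvec_Bmat: "cvec (Bmat m t1 t2 t3 i *v x) = bcoef m t1 t2 t3 i * cvec x"
  and cvec_transpose_Bmat: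
    "cvec (transpose (Bmat m t1 t2 t3 i) *v x) = cnj (bcoef m t1 t2 t3 i) * cvec x"
  by (cases "i = 1"; cases "i = 2";
      simp add: Bmat_def bcoef_def transpose_scalar cvec_scaleR_matrix cvec_rot cvec_transpose_rot
        del: transpose_matrix_vector scaleR_minus_left)+

lemma cvec_Amat_diff: "cvec ((Amat m t1 t2 t3 i - Amat m t1 t2 t3 j) *v z)
    = (cvec (avec m t1 t2 t3 i) - cvec (avec m t1 t2 t3 j)) * cvec z"
  by (simp add: matrix_vector_mult_diff_rdistrib cvec_Amat algebra_simps)

lemma cvec_Bmat_diff: "cvec ((Bmat m t1 t2 t3 i - Bmat m t1 t2 t3 j) *v w)
    = (bcoef m t1 t2 t3 i - bcoef m t1 t2 t3 j) * cvec w"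
  by (simp add: matrix_vector_mult_diff_rdistrib cvec_Bmat algebra_simps)

lemma sum_over_three: "(\<Sum>i\<in>{1,2,3::nat}. f i) = f 1 + f 2 + f 3"
  by (simp add: add.assoc)

lemma sum_over_pairs:
  "(\<Sum>(i, j)\<in>{(1, 2), (1, 3), (2, 3)::nat \<times> nat}. f i j) = f 1 2 + f 1 3 + f 2 3"
  by (simp add: add.assoc)

lemma three_body_lagrange_identity:
  fixes m1 m2 m3 :: "'a::comm_ring"
  shows "m1*m2*((x1-x2)*(y1-y2)) + m1*m3*((x1-x3)*(y1-y3)) + m2*m3*((x2-x3)*(y2-y3)) =
    (m1+m2+m3)*(m1*x1*y1+m2*x2*y2+m3*x3*y3) - (m1*x1+m2*x2+m3*x3)*(m1*y1+m2*y2+m3*y3)"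
  by (simp add: algebra_simps)

lemma three_body_pair_orthogonality:
  fixes a b :: "nat \<Rightarrow> complex" and m :: "nat \<Rightarrow> real"
  assumes "m 1 + m 2 + m 3 = 1" and "(\<Sum>i\<in>{1,2,3}. m i *\<^sub>R a i) = 0"
    and "(\<Sum>i\<in>{1,2,3}. m i *\<^sub>R (cnj (a i) * b i)) = 0"
  shows "(\<Sum>(i, j)\<in>{(1, 2), (1, 3), (2, 3)}. (m i * m j) *\<^sub>R (cnj (a i - a j) * (b i - b j))) = 0"
proof -
  have mass: "complex_of_real (m 1) + of_real (m 2) + of_real (m 3) = 1"
    using assms(1) by (metis of_real_1 of_real_add)
  have "(\<Sum>i\<in>{1,2,3}. m i *\<^sub>R cnj (a i)) = 0"
    using arg_cong[OF assms(2), of cnj] by (simp add: complex_cnj_scaleR)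
  then show ?thesis
    using three_body_lagrange_identity[of "of_real (m 1)" "of_real (m 2)" "cnj (a 1)" "cnj (a 2)"
        "b 1" "b 2" "of_real (m 3)" "cnj (a 3)" "b 3"] assms(3)
    unfolding sum_over_three sum_over_pairs scaleR_conv_of_real mass
    by (simp add: mult.assoc)
qed

lemma weighted_orthonormal_solve:
  fixes a b :: "'i \<Rightarrow> complex" and m :: "'i \<Rightarrow> real" and g z w k :: complex
  assumes mass: "(\<Sum>i\<in>I. m i) = 1"
    and a_centred: "(\<Sum>i\<in>I. m i *\<^sub>R a i) = 0" and b_centred: "(\<Sum>i\<in>I. m i *\<^sub>R b i) = 0"
    and a_unit: "(\<Sum>i\<in>I. m i *\<^sub>R (cnj (a i) * a i)) = 1"
    and b_unit: "(\<Sum>i\<in>I. m i *\<^sub>R (cnj (b i) * b i)) = 1"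
    and ab_orth: "(\<Sum>i\<in>I. m i *\<^sub>R (cnj (a i) * b i)) = 0"
    and eq: "\<And>i. i \<in> I \<Longrightarrow> g + a i * z + b i * w = a i * k"
  shows "g = 0 \<and> z = k \<and> w = 0"
proof -
  have ba_orth: "(\<Sum>i\<in>I. m i *\<^sub>R (cnj (b i) * a i)) = 0"
    using arg_cong[OF ab_orth, of cnj] by (simp add: mult.commute)
  have residual: "(\<Sum>i\<in>I. m i *\<^sub>R (c i * (g + a i * z + b i * w - a i * k))) = 0" for c
    using eq by simp
  have tested: "g * (\<Sum>i\<in>I. m i *\<^sub>R c i) + (z - k) * (\<Sum>i\<in>I. m i *\<^sub>R (c i * a i))
      + w * (\<Sum>i\<in>I. m i *\<^sub>R (c i * b i)) = 0" for c
    using residual[of c] by (simp add: sum_distrib_left sum.distrib[symmetric] algebra_simps)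
  \<comment> \<open>Test the equations against the orthonormal weights 1, conj a_i and conj b_i.\<close>
  from tested[of "\<lambda>_. 1"] tested[of "\<lambda>i. cnj (a i)"] tested[of "\<lambda>i. cnj (b i)"] show ?thesis
    using a_centred b_centred a_unit b_unit ab_orth ba_orth mass
    by (simp add: scaleR_conv_of_real cnj_sum[symmetric] flip: of_real_sum)
qed

lemma has_derivative_inverse_norm_affine:
  fixes L :: "'a::real_normed_vector \<Rightarrow> 'b::real_inner"
  assumes L: "bounded_linear L" and nz: "d + L w0 \<noteq> 0"
  shows "((\<lambda>w. c / norm (d + L w)) has_derivative
      (\<lambda>v. - c * ((d + L w0) \<bullet> L v) / norm (d + L w0) ^ 3)) (at w0)"
proof -
  define x where "x = d + L w0"
  have affine: "((\<lambda>w. d + L w) has_derivative L) (at w0)"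
    using has_derivative_add[OF has_derivative_const bounded_linear_imp_has_derivative[OF L]] by simp
  have "((\<lambda>w. norm (d + L w)) has_derivative (\<lambda>v. L v \<bullet> sgn x)) (at w0)"
    using has_derivative_compose[OF affine has_derivative_norm[OF nz]] unfolding x_def by simp
  from has_derivative_divide[OF has_derivative_const this, of c]
  have "((\<lambda>w. c / norm (d + L w)) has_derivative
      (\<lambda>v. - c * (inverse (norm x) * (L v \<bullet> sgn x) * inverse (norm x)) + 0 / norm x)) (at w0)"
    using nz unfolding x_def by simp
  moreover have "(\<lambda>v. - c * (inverse (norm x) * (L v \<bullet> sgn x) * inverse (norm x)) + 0 / norm x)
      = (\<lambda>v. - c * (x \<bullet> L v) / norm x ^ 3)"
    by (simp add: sgn_div_norm inner_commute field_simps power3_eq_cube)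
  ultimately show ?thesis unfolding x_def by simp
qed

lemma polar_angle_has_derivative:
  fixes X Y r \<theta> :: "real \<Rightarrow> real"
  assumes polar: "\<And>t. X t = r t * cos (\<theta> t)" "\<And>t. Y t = r t * sin (\<theta> t)"
    and r_pos: "\<And>t. r t > 0"
    and deriv: "(X has_real_derivative VX) (at t0)" "(Y has_real_derivative VY) (at t0)"
      "(r has_real_derivative r') (at t0)"
    and cont: "isCont \<theta> t0"
  shows "(\<theta> has_real_derivative (X t0 * VY - Y t0 * VX) / (r t0)\<^sup>2) (at t0)"
proof -
  \<comment> \<open>Near t0 the angle is recovered as theta t0 + arcsin f, with f differentiable.\<close>
  define f where "f t = cos (\<theta> t0) * (Y t / r t) - sin (\<theta> t0) * (X t / r t)" for t
  have f_sin: "f t = sin (\<theta> t - \<theta> t0)" for t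
    unfolding f_def polar using r_pos[of t] by (simp add: sin_diff algebra_simps)
  obtain d where "d > 0" and close: "\<And>t. dist t t0 < d \<Longrightarrow> dist (\<theta> t) (\<theta> t0) < pi / 2"
    using cont pi_half_gt_zero unfolding continuous_at_eps_delta by blast
  have local_inverse: "\<theta> t0 + arcsin (f t) = \<theta> t" if "t \<in> ball t0 d" for t
  proof -
    have "\<bar>\<theta> t - \<theta> t0\<bar> < pi / 2" using close[of t] that by (simp add: dist_real_def dist_commute)
    then have "arcsin (sin (\<theta> t - \<theta> t0)) = \<theta> t - \<theta> t0" by (intro arcsin_sin) linarith+
    then show ?thesis unfolding f_sin by simp
  qed
  define f' where "f' = cos (\<theta> t0) * ((VY * r t0 - Y t0 * r') / (r t0 * r t0))
      - sin (\<theta> t0) * ((VX * r t0 - X t0 * r') / (r t0 * r t0))"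
  have "(f has_real_derivative f') (at t0)"
    unfolding f_def[abs_def] f'_def using r_pos[of t0]
    by (intro DERIV_diff DERIV_cmult DERIV_divide deriv) simp_all
  moreover have "(arcsin has_real_derivative 1) (at (f t0))"
    using DERIV_arcsin[of "f t0"] unfolding f_sin by simp
  ultimately have "((\<lambda>t. \<theta> t0 + arcsin (f t)) has_real_derivative f') (at t0)"
    using DERIV_add[OF DERIV_const DERIV_chain2] by fastforce
  then have "(\<theta> has_real_derivative f') (at t0)"
    by (rule has_field_derivative_transform_within_open[of _ _ _ "ball t0 d"])
      (use \<open>d > 0\<close> local_inverse in auto)
  moreover have "f' = (X t0 * VY - Y t0 * VX) / (r t0)\<^sup>2"
    unfolding f'_def polar using r_pos[of t0] by (simp add: field_simps power2_eq_square)
  ultimately show ?thesis by simp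
qed

lemma surj_of_derivative_bounded_below:
  fixes f f' :: "real \<Rightarrow> real"
  assumes deriv: "\<And>t. (f has_real_derivative f' t) (at t)" and bound: "\<And>t. f' t \<ge> k" and "k > 0"
  shows "\<exists>t. f t = y"
proof -
  have grow: "f a - k * a \<le> f b - k * b" if "a \<le> b" for a b
    using bound that
    by (intro DERIV_nonneg_imp_nondecreasing[of a b "\<lambda>t. f t - k * t"])
      (auto intro!: derivative_eq_intros deriv)
  have cont: "continuous_on {a..b} f" for a b
    using deriv by (intro continuous_at_imp_continuous_on ballI DERIV_isCont) auto
  define b where "b = (y - f 0) / k"
  show ?thesis
  proof (cases "b \<ge> 0")
    case True
    then have "f 0 \<le> y" "y \<le> f b" using grow[OF True] \<open>k > 0\<close> by (auto simp: b_def field_simps)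
    then show ?thesis using IVT'[OF _ _ True cont] by blast
  next
    case False
    then have "f b \<le> y" "y \<le> f 0" using grow[of b 0] \<open>k > 0\<close> by (auto simp: b_def field_simps)
    then show ?thesis using IVT'[OF _ _ _ cont, of b y 0] False by auto
  qed
qed

section \<open>Kepler orbits\<close>

lemma conic_radius_bounds:
  fixes e p \<theta> :: real
  assumes "0 \<le> e" "e < 1" "p > 0"
  shows "0 < p / (1 + e * cos \<theta>)" "p / (1 + e * cos \<theta>) \<le> p / (1 - e)"
proof -
  have "e * cos \<theta> \<ge> - e" using assms mult_left_mono[of "-1" "cos \<theta>" e] by simp
  then show "0 < p / (1 + e * cos \<theta>)" "p / (1 + e * cos \<theta>) \<le> p / (1 - e)"
    using assms by (auto intro: divide_left_mono)
qed

lemma kepler_conic_identities: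
  fixes X Y VX VY r r' :: "real \<Rightarrow> real" and \<mu> p e t :: real
  assumes velocity: "\<And>t. (X has_real_derivative VX t) (at t)" "\<And>t. (Y has_real_derivative VY t) (at t)"
    and acceleration: "\<And>t. (VX has_real_derivative - \<mu> * X t / r t ^ 3) (at t)"
      "\<And>t. (VY has_real_derivative - \<mu> * Y t / r t ^ 3) (at t)"
    and radius: "\<And>t. (r t)\<^sup>2 = (X t)\<^sup>2 + (Y t)\<^sup>2" "\<And>t. r t > 0"
    and conic: "\<And>t. r t = p - e * X t"
    and r_deriv: "\<And>t. (r has_real_derivative r' t) (at t)"
  shows "r t * r' t = X t * VX t + Y t * VY t" "(X t * VY t - Y t * VX t)\<^sup>2 = \<mu> * p"
proof -
  have r'_eq: "r' t = - e * VX t" for t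
    using DERIV_unique[OF r_deriv] DERIV_diff[OF DERIV_const[of p] DERIV_cmult[OF velocity(1), of e]]
    unfolding conic[abs_def] by fastforce
  have radial: "r t * r' t = X t * VX t + Y t * VY t" for t
  proof -
    have "((\<lambda>t. (r t)\<^sup>2) has_real_derivative 2 * r t * r' t) (at t)"
      using DERIV_power[OF r_deriv, of 2 t] by (simp add: ac_simps)
    moreover have "((\<lambda>t. (r t)\<^sup>2) has_real_derivative 2 * X t * VX t + 2 * Y t * VY t) (at t)"
      using DERIV_add[OF DERIV_power[OF velocity(1), of 2] DERIV_power[OF velocity(2), of 2]]
      unfolding radius by (simp add: ac_simps)
    ultimately show ?thesis using DERIV_unique by fastforce
  qed
  then show "r t * r' t = X t * VX t + Y t * VY t" .
  have vis_viva: "(r' t)\<^sup>2 + \<mu> * p / (r t)\<^sup>2 = (VX t)\<^sup>2 + (VY t)\<^sup>2"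
  proof -
    note DERIV_mult[OF r_deriv DERIV_cmult[OF acceleration(1)], of "- e" t]
    moreover note DERIV_add[OF DERIV_mult[OF velocity(1) acceleration(1)] DERIV_mult[OF velocity(2) acceleration(2)], of t]
    moreover have "(\<lambda>t. r t * (- e * VX t)) = (\<lambda>t. X t * VX t + Y t * VY t)"
      using radial r'_eq by (auto simp flip: r'_eq)
    ultimately have "r' t * (- e * VX t) + (- e * (- \<mu> * X t / r t ^ 3)) * r t
        = (VX t)\<^sup>2 + (VY t)\<^sup>2 - \<mu> * ((X t)\<^sup>2 + (Y t)\<^sup>2) / r t ^ 3"
      using DERIV_unique by (fastforce simp: power2_eq_square diff_divide_distrib add_divide_distrib algebra_simps)
    also have "\<mu> * ((X t)\<^sup>2 + (Y t)\<^sup>2) / r t ^ 3 = \<mu> / r t"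
      using radius(2)[of t] unfolding radius(1)[symmetric] by (simp add: power2_eq_square power3_eq_cube)
    also have "r' t * (- e * VX t) = (r' t)\<^sup>2"
      unfolding r'_eq by (simp add: power2_eq_square)
    also have "(- e * (- \<mu> * X t / r t ^ 3)) * r t = \<mu> * p / (r t)\<^sup>2 - \<mu> / r t"
      using radius(2)[of t] conic[of t]
      by (simp add: field_simps power2_eq_square power3_eq_cube) (simp flip: distrib_left)
    finally show ?thesis by simp
  qed
  have "(r t * r' t)\<^sup>2 + (X t * VY t - Y t * VX t)\<^sup>2 = (r t)\<^sup>2 * ((VX t)\<^sup>2 + (VY t)\<^sup>2)"
    unfolding radial radius by (simp add: algebra_simps power2_eq_square)
  also have "\<dots> = (r t * r' t)\<^sup>2 + \<mu> * p"
    using radius(2)[of t] unfolding vis_viva[symmetric] by (simp add: field_simps power2_eq_square)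
  finally show "(X t * VY t - Y t * VX t)\<^sup>2 = \<mu> * p" by simp
qed

locale elliptic_kepler_orbit =
  fixes zK zK' :: "real \<Rightarrow> real^2" and r r' ang :: "real \<Rightarrow> real" and \<mu> p e :: real
  assumes polar: "\<And>t. zK t = r t *\<^sub>R vec2 (cos (ang t)) (sin (ang t))"
    and velocity: "\<And>t. (zK has_vector_derivative zK' t) (at t)"
    and acceleration: "\<And>t. (zK' has_vector_derivative (- (\<mu> / (norm (zK t))^3)) *\<^sub>R zK t) (at t)"
    and conic: "\<And>t. r t = p / (1 + e * cos (ang t))"
    and r_deriv: "\<And>t. (r has_real_derivative r' t) (at t)"
    and ecc: "0 \<le> e" "e < 1" and par: "p > 0" and mu_pos: "\<mu> > 0"
    and anomaly: "continuous_on UNIV ang" "strict_mono ang"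
begin

lemma radius_pos: "r t > 0" and radius_le: "r t \<le> p / (1 - e)"
  unfolding conic using conic_radius_bounds[OF ecc par] by auto

lemma cartesian_polar: "zK t $ 1 = r t * cos (ang t)" "zK t $ 2 = r t * sin (ang t)"
  unfolding polar by simp_all

lemma radial_velocity: "r t * r' t = zK t \<bullet> zK' t"
  and angular_momentum_squared: "(cross2 (zK t) (zK' t))\<^sup>2 = \<mu> * p"
proof -
  define X where "X t = zK t $ 1" for t
  define Y where "Y t = zK t $ 2" for t
  define VX where "VX t = zK' t $ 1" for t
  define VY where "VY t = zK' t $ 2" for t
  have radius: "(r t)\<^sup>2 = (X t)\<^sup>2 + (Y t)\<^sup>2" for t
    unfolding X_def Y_def cartesian_polar by (simp add: power_mult_distrib flip: distrib_left)
  have norm_zK: "norm (zK t) = r t" for t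
    using radius[of t] radius_pos[of t] unfolding X_def Y_def
    by (simp add: norm_vec_def L2_set_def sum_2 real_sqrt_unique)
  have dX: "(X has_real_derivative VX t) (at t)" "(Y has_real_derivative VY t) (at t)" for t
    unfolding X_def Y_def VX_def VY_def by (simp_all add: has_real_derivative_component[OF velocity])
  have dV: "(VX has_real_derivative - \<mu> * X t / r t ^ 3) (at t)"
    "(VY has_real_derivative - \<mu> * Y t / r t ^ 3) (at t)" for t
    unfolding X_def Y_def VX_def VY_def
    using has_real_derivative_component[OF acceleration] by (simp_all add: norm_zK)
  have conic_linear: "r t = p - e * X t" for t
  proof -
    have "1 + e * cos (ang t) > 0"
      using conic_radius_bounds(1)[OF ecc par] par by (simp add: zero_less_divide_iff)
    then show ?thesis using conic[of t] unfolding X_def cartesian_polar by (simp add: field_simps)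
  qed
  note kepler = kepler_conic_identities[OF dX dV radius radius_pos conic_linear r_deriv]
  show "r t * r' t = zK t \<bullet> zK' t"
    using kepler(1) unfolding X_def Y_def VX_def VY_def by (simp add: inner_vec2)
  show "(cross2 (zK t) (zK' t))\<^sup>2 = \<mu> * p"
    using kepler(2) unfolding X_def Y_def VX_def VY_def cross2_def .
qed

lemma anomaly_has_derivative: "(ang has_real_derivative cross2 (zK t) (zK' t) / (r t)\<^sup>2) (at t)"
  using polar_angle_has_derivative[OF cartesian_polar radius_pos
      has_real_derivative_component[OF velocity] has_real_derivative_component[OF velocity] r_deriv]
    anomaly(1)
  unfolding cross2_def by (simp add: continuous_on_eq_continuous_at)

lemma angular_momentum: "cross2 (zK t) (zK' t) = sqrt (\<mu> * p)"
proof -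
  have "cross2 (zK t) (zK' t) \<ge> 0"
  proof (rule ccontr)
    assume "\<not> ?thesis"
    with radius_pos[of t] have "cross2 (zK t) (zK' t) / (r t)\<^sup>2 < 0" by (simp add: divide_neg_pos)
    from DERIV_neg_dec_right[OF anomaly_has_derivative this] obtain d where
      "d > 0" "\<And>h. h > 0 \<Longrightarrow> h < d \<Longrightarrow> ang t > ang (t + h)" by blast
    then have "ang (t + d / 2) < ang t" by simp
    moreover have "ang t < ang (t + d / 2)" using anomaly(2) \<open>d > 0\<close> by (simp add: strict_mono_less)
    ultimately show False by simp
  qed
  then show ?thesis using angular_momentum_squared by (metis real_sqrt_unique)
qed

lemma anomaly_surj: "\<exists>t. ang t = \<theta>"
proof (rule surj_of_derivative_bounded_below)
  show "(ang has_real_derivative sqrt (\<mu> * p) / (r t)\<^sup>2) (at t)" for t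
    using anomaly_has_derivative unfolding angular_momentum .
  show "sqrt (\<mu> * p) / (r t)\<^sup>2 \<ge> sqrt (\<mu> * p) / (p / (1 - e))\<^sup>2" for t
    using radius_pos[of t] radius_le[of t] par mu_pos
    by (intro divide_left_mono power_mono mult_pos_pos) auto
  show "sqrt (\<mu> * p) / (p / (1 - e))\<^sup>2 > 0" using par mu_pos ecc by simp
qed

end

section \<open>The central configuration\<close>

lemma triangle_closure:
  assumes "t1 + t2 + t3 = pi"
  shows "of_real (sin t3) * cis t2 + of_real (sin t2) * cis (- t3) = complex_of_real (sin t1)"
proof -
  have "t1 = pi - (t2 + t3)" using assms by linarith
  then have "sin t1 = sin t2 * cos t3 + cos t2 * sin t3" by (simp add: sin_add)
  then show ?thesis by (simp add: complex_eq_iff cis.sel algebra_simps)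
qed

locale central_configuration =
  fixes m :: "nat \<Rightarrow> real" and t1 t2 t3 :: real
  assumes m_pos: "m 1 > 0" "m 2 > 0" "m 3 > 0" and m_sum: "m 1 + m 2 + m 3 = 1"
    and angles: "t1 > 0" "t2 > 0" "t3 > 0" "t1 + t2 + t3 = pi"
begin

abbreviation A :: real where "A \<equiv> alpha m t1 t2 t3"
abbreviation a :: "nat \<Rightarrow> complex" where "a i \<equiv> cvec (avec m t1 t2 t3 i)"
abbreviation b :: "nat \<Rightarrow> complex" where "b \<equiv> bcoef m t1 t2 t3"

lemma sin_pos: "sin t1 > 0" "sin t2 > 0" "sin t3 > 0"
  using angles by (simp_all add: sin_gt_zero)

lemma alpha_pos: "A > 0"
  using m_pos sin_pos by (simp add: alpha_def add_pos_pos)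

lemma alpha_squared: "A\<^sup>2 = m 2 * m 3 * (sin t1)\<^sup>2 + m 3 * m 1 * (sin t2)\<^sup>2 + m 1 * m 2 * (sin t3)\<^sup>2"
  using m_pos by (simp add: alpha_def add_nonneg_nonneg)

lemma mass_complex: "complex_of_real (m 1) + of_real (m 2) + of_real (m 3) = 1"
  using m_sum by (metis of_real_1 of_real_add)

lemma closure: "of_real (sin t1) - of_real (sin t3) * cis t2 - of_real (sin t2) * cis (- t3) = 0"
  using triangle_closure[OF angles(4)] by (simp add: algebra_simps)

lemma a_explicit:
  defines "Ac \<equiv> complex_of_real A" and "M \<equiv> \<lambda>i. complex_of_real (m i)"
    and "S \<equiv> \<lambda>t. complex_of_real (sin t)"
  shows "a 1 = (M 2 * S t3 * cis t2 - M 3 * S t2 * cis (- t3)) / Ac"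
    "a 2 = (- M 1 * S t3 * cis t2 - M 3 * S t1) / Ac"
    "a 3 = (M 1 * S t2 * cis (- t3) + M 2 * S t1) / Ac"
proof -
  have "t2 + t3 = pi - t1" using angles(4) by linarith
  then have "sin (t2 + t3) = sin t1" by simp
  then have "Complex (m 2 * cos t2 * sin t3 - m 3 * sin t2 * cos t3) ((m 2 + m 3) * sin t2 * sin t3)
      = M 2 * S t3 * cis t2 - M 3 * S t2 * cis (- t3)"
    "Complex (- m 1 * cos t2 * sin t3 - m 3 * sin (t2 + t3)) (- m 1 * sin t2 * sin t3)
      = - M 1 * S t3 * cis t2 - M 3 * S t1"
    "Complex (m 2 * sin (t2 + t3) + m 1 * sin t2 * cos t3) (- m 1 * sin t2 * sin t3)
      = M 1 * S t2 * cis (- t3) + M 2 * S t1"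
    by (simp_all add: M_def S_def complex_eq_iff cis.sel algebra_simps)
  then show "a 1 = (M 2 * S t3 * cis t2 - M 3 * S t2 * cis (- t3)) / Ac"
    "a 2 = (- M 1 * S t3 * cis t2 - M 3 * S t1) / Ac"
    "a 3 = (M 1 * S t2 * cis (- t3) + M 2 * S t1) / Ac"
    by (simp_all add: avec_def Ac_def)
qed

lemma b_explicit:
  defines "Ac \<equiv> complex_of_real A" and "M \<equiv> \<lambda>i. complex_of_real (m i)"
    and "S \<equiv> \<lambda>t. complex_of_real (sin t)" and "K \<equiv> complex_of_real (sqrt (m 1 * m 2 * m 3))"
  shows "b 1 = K / M 1 * S t1 / Ac" "b 2 = - K / M 2 * S t2 * cis t3 / Ac"
    "b 3 = - K / M 3 * S t3 * cis (- t2) / Ac"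
  unfolding bcoef_def rho_def Ac_def M_def S_def K_def by simp_all

lemma a_differences:
  defines "Ac \<equiv> complex_of_real A" and "S \<equiv> \<lambda>t. complex_of_real (sin t)"
  shows "a 1 - a 2 = S t3 * cis t2 / Ac" "a 1 - a 3 = - S t2 * cis (- t3) / Ac"
    "a 2 - a 3 = - S t1 / Ac"
proof -
  define M where "M i = complex_of_real (m i)" for i
  have mass: "M 1 + M 2 + M 3 = 1" using mass_complex unfolding M_def .
  have closure: "S t1 - S t3 * cis t2 - S t2 * cis (- t3) = 0" using closure unfolding S_def .
  have a: "a 1 = (M 2 * S t3 * cis t2 - M 3 * S t2 * cis (- t3)) / Ac"
    "a 2 = (- M 1 * S t3 * cis t2 - M 3 * S t1) / Ac"
    "a 3 = (M 1 * S t2 * cis (- t3) + M 2 * S t1) / Ac"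
    using a_explicit unfolding Ac_def M_def S_def by simp_all
  have "M 2 * S t3 * cis t2 - M 3 * S t2 * cis (- t3) - (- M 1 * S t3 * cis t2 - M 3 * S t1)
      = (M 1 + M 2 + M 3) * S t3 * cis t2 + M 3 * (S t1 - S t3 * cis t2 - S t2 * cis (- t3))"
    "M 2 * S t3 * cis t2 - M 3 * S t2 * cis (- t3) - (M 1 * S t2 * cis (- t3) + M 2 * S t1)
      = - (M 1 + M 2 + M 3) * S t2 * cis (- t3) - M 2 * (S t1 - S t3 * cis t2 - S t2 * cis (- t3))"
    "- M 1 * S t3 * cis t2 - M 3 * S t1 - (M 1 * S t2 * cis (- t3) + M 2 * S t1)
      = - (M 1 + M 2 + M 3) * S t1 + M 1 * (S t1 - S t3 * cis t2 - S t2 * cis (- t3))"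
    by (simp_all add: algebra_simps)
  then show "a 1 - a 2 = S t3 * cis t2 / Ac" "a 1 - a 3 = - S t2 * cis (- t3) / Ac"
    "a 2 - a 3 = - S t1 / Ac"
    unfolding a mass closure diff_divide_distrib[symmetric]
    by simp_all
qed

lemma side_lengths:
  "norm (avec m t1 t2 t3 1 - avec m t1 t2 t3 2) = sin t3 / A"
  "norm (avec m t1 t2 t3 1 - avec m t1 t2 t3 3) = sin t2 / A"
  "norm (avec m t1 t2 t3 2 - avec m t1 t2 t3 3) = sin t1 / A"
  using a_differences sin_pos alpha_pos by (simp_all flip: norm_cvec add: norm_divide norm_mult)

lemma side_lengths_pos:
  "norm (avec m t1 t2 t3 1 - avec m t1 t2 t3 2) > 0"
  "norm (avec m t1 t2 t3 1 - avec m t1 t2 t3 3) > 0"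
  "norm (avec m t1 t2 t3 2 - avec m t1 t2 t3 3) > 0"
  unfolding side_lengths using sin_pos alpha_pos by simp_all

lemma a_centred: "(\<Sum>i\<in>{1,2,3}. m i *\<^sub>R a i) = 0"
  using alpha_pos unfolding sum_over_three scaleR_conv_of_real a_explicit by (simp add: field_simps)

lemma b_centred: "(\<Sum>i\<in>{1,2,3}. m i *\<^sub>R b i) = 0"
proof -
  define S where "S t = complex_of_real (sin t)" for t
  define K where "K = complex_of_real (sqrt (m 1 * m 2 * m 3))"
  have "(\<Sum>i\<in>{1,2,3}. m i *\<^sub>R b i) = K * (S t1 - S t3 * cis (- t2) - S t2 * cis t3) / of_real A"
    using alpha_pos m_pos unfolding sum_over_three scaleR_conv_of_real b_explicit S_def K_def
    by (simp add: field_simps)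
  also have "S t1 - S t3 * cis (- t2) - S t2 * cis t3 = cnj (S t1 - S t3 * cis t2 - S t2 * cis (- t3))"
    unfolding S_def by (simp add: cis_cnj)
  finally show ?thesis unfolding S_def closure by simp
qed

lemma cnj_mult_self: "cnj z * z = of_real ((cmod z)\<^sup>2)"
  by (simp only: complex_norm_square mult.commute)

text \<open>By Lagrange's identity the inertia of (a_i) is the weighted sum of the squared sides.\<close>

lemma a_unit: "(\<Sum>i\<in>{1,2,3}. m i *\<^sub>R (cnj (a i) * a i)) = 1"
proof -
  define M where "M i = complex_of_real (m i)" for i
  have "(\<Sum>i\<in>{1,2,3}. m i *\<^sub>R (cnj (a i) * a i))
      = M 1 * M 2 * (cnj (a 1 - a 2) * (a 1 - a 2)) + M 1 * M 3 * (cnj (a 1 - a 3) * (a 1 - a 3))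
        + M 2 * M 3 * (cnj (a 2 - a 3) * (a 2 - a 3))"
    using three_body_lagrange_identity[of "M 1" "M 2" "cnj (a 1)" "cnj (a 2)" "a 1" "a 2" "M 3" "cnj (a 3)" "a 3"]
      arg_cong[OF a_centred, of cnj]
    unfolding sum_over_three scaleR_conv_of_real M_def mass_complex
    by (simp add: mult.assoc)
  also have "\<dots> = of_real ((m 2 * m 3 * (sin t1)\<^sup>2 + m 3 * m 1 * (sin t2)\<^sup>2 + m 1 * m 2 * (sin t3)\<^sup>2) / A\<^sup>2)"
    unfolding cnj_mult_self cvec_simps(3)[symmetric] norm_cvec M_def side_lengths
    by (simp add: power_divide add_divide_distrib algebra_simps)
  also have "\<dots> = 1"
    unfolding alpha_squared[symmetric] using alpha_pos by simp
  finally show ?thesis .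
qed

lemma b_unit: "(\<Sum>i\<in>{1,2,3}. m i *\<^sub>R (cnj (b i) * b i)) = 1"
proof -
  have rho_mass: "m 1 * (rho m 1)\<^sup>2 * x1 + m 2 * (rho m 2)\<^sup>2 * x2 + m 3 * (rho m 3)\<^sup>2 * x3
      = m 2 * m 3 * x1 + m 3 * m 1 * x2 + m 1 * m 2 * x3" for x1 x2 x3
    using m_pos by (simp add: rho_def power_divide field_simps power2_eq_square)
  have "(cmod (b 1))\<^sup>2 = (rho m 1 * sin t1 / A)\<^sup>2" "(cmod (b 2))\<^sup>2 = (rho m 2 * sin t2 / A)\<^sup>2"
    "(cmod (b 3))\<^sup>2 = (rho m 3 * sin t3 / A)\<^sup>2"
    unfolding bcoef_def by (simp_all add: norm_mult norm_divide power_mult_distrib power_divide)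
  then have "(\<Sum>i\<in>{1,2,3}. m i *\<^sub>R (cnj (b i) * b i))
      = of_real ((m 1 * (rho m 1)\<^sup>2 * (sin t1)\<^sup>2 + m 2 * (rho m 2)\<^sup>2 * (sin t2)\<^sup>2
          + m 3 * (rho m 3)\<^sup>2 * (sin t3)\<^sup>2) / A\<^sup>2)"
    unfolding sum_over_three scaleR_conv_of_real cnj_mult_self
    by (simp add: power_divide power_mult_distrib add_divide_distrib algebra_simps)
  also have "\<dots> = 1"
    unfolding rho_mass alpha_squared[symmetric] using alpha_pos by simp
  finally show ?thesis .
qed

lemma ab_orthogonal: "(\<Sum>i\<in>{1,2,3}. m i *\<^sub>R (cnj (a i) * b i)) = 0"
  using alpha_pos m_pos
  unfolding sum_over_three scaleR_conv_of_real a_explicit b_explicit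
  by (simp add: cis_cnj field_simps)

lemma pair_orthogonal:
  "(\<Sum>(i, j)\<in>{(1, 2), (1, 3), (2, 3)}. (m i * m j) *\<^sub>R (cnj (a i - a j) * (b i - b j))) = 0"
  using three_body_pair_orthogonality[OF m_sum a_centred ab_orthogonal] .

lemma calA_act_eq_Amat_iff:
  "(\<forall>i\<in>{1,2,3}. calA_act m t1 t2 t3 g z w i = Amat m t1 t2 t3 i *v k) \<longleftrightarrow> g = 0 \<and> z = k \<and> w = 0"
proof
  assume eq: "\<forall>i\<in>{1,2,3}. calA_act m t1 t2 t3 g z w i = Amat m t1 t2 t3 i *v k"
  have "cvec g + a i * cvec z + b i * cvec w = a i * cvec k" if "i \<in> {1,2,3}" for i
    using arg_cong[OF eq[rule_format, OF that], of cvec] by (simp add: calA_act_def cvec_Amat cvec_Bmat)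
  moreover have "(\<Sum>i\<in>{1,2,3}. m i) = 1" using m_sum by (simp add: sum_over_three)
  ultimately have "cvec g = 0 \<and> cvec z = cvec k \<and> cvec w = 0"
    using weighted_orthonormal_solve[OF _ a_centred b_centred a_unit b_unit ab_orthogonal] by blast
  then show "g = 0 \<and> z = k \<and> w = 0" by (metis cvec_eq_iff cvec_simps(1))
qed (simp add: calA_act_def)

lemma calAT_act_Amat_momenta: "calAT_act m t1 t2 t3 (\<lambda>i. m i *\<^sub>R (Amat m t1 t2 t3 i *v v)) = (0, v, 0)"
proof -
  have ba_orthogonal: "(\<Sum>i\<in>{1,2,3}. m i *\<^sub>R (cnj (b i) * a i)) = 0"
    using arg_cong[OF ab_orthogonal, of cnj] by (simp add: complex_cnj_scaleR mult.commute)
  have "cvec (\<Sum>i\<in>{1,2,3}. m i *\<^sub>R (Amat m t1 t2 t3 i *v v)) = (\<Sum>i\<in>{1,2,3}. m i *\<^sub>R a i) * cvec v"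
    "cvec (\<Sum>i\<in>{1,2,3}. transpose (Amat m t1 t2 t3 i) *v (m i *\<^sub>R (Amat m t1 t2 t3 i *v v)))
      = (\<Sum>i\<in>{1,2,3}. m i *\<^sub>R (cnj (a i) * a i)) * cvec v"
    "cvec (\<Sum>i\<in>{1,2,3}. transpose (Bmat m t1 t2 t3 i) *v (m i *\<^sub>R (Amat m t1 t2 t3 i *v v)))
      = (\<Sum>i\<in>{1,2,3}. m i *\<^sub>R (cnj (b i) * a i)) * cvec v"
    unfolding cvec_sum sum_distrib_right
    by (simp_all add: cvec_Amat cvec_transpose_Amat cvec_transpose_Bmat matrix_vector_mult_scaleR
        ac_simps del: transpose_matrix_vector, simp_all only: scaleR_conv_of_real ac_simps)
  then show ?thesis
    unfolding calAT_act_def a_centred a_unit ba_orthogonal by (simp add: cvec_eq_iff[symmetric])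
qed

lemma delta_proportional_to_cubed_sides:
  assumes sines: "sin t1 * root 3 (delta m q 3 1) = sin t2 * root 3 (delta m q 2 3)"
      "sin t2 * root 3 (delta m q 1 2) = sin t3 * root 3 (delta m q 3 1)"
  obtains \<kappa> where "delta m q 1 2 = \<kappa> * (norm (avec m t1 t2 t3 1 - avec m t1 t2 t3 2))^3"
    "delta m q 1 3 = \<kappa> * (norm (avec m t1 t2 t3 1 - avec m t1 t2 t3 3))^3"
    "delta m q 2 3 = \<kappa> * (norm (avec m t1 t2 t3 2 - avec m t1 t2 t3 3))^3"
proof
  define k where "k = root 3 (delta m q 2 3) / sin t1"
  have root23: "root 3 (delta m q 2 3) = k * sin t1" and root31: "root 3 (delta m q 3 1) = k * sin t2"
    using sines(1) sin_pos unfolding k_def by (simp_all add: field_simps)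
  have root12: "root 3 (delta m q 1 2) = k * sin t3"
    using sines(2) sin_pos unfolding root31 by (simp add: field_simps)
  have cube: "delta m q i j = (root 3 (delta m q i j)) ^ 3" for i j
    by (simp add: odd_real_root_pow)
  have "delta m q 1 3 = delta m q 3 1" unfolding delta_def by (simp add: mult.commute)
  then have "delta m q 1 2 = (k * sin t3) ^ 3" "delta m q 1 3 = (k * sin t2) ^ 3"
    "delta m q 2 3 = (k * sin t1) ^ 3"
    using cube[of 1 2] cube[of 3 1] cube[of 2 3] unfolding root12 root23 root31 by simp_all
  then show "delta m q 1 2 = (k * A) ^ 3 * (norm (avec m t1 t2 t3 1 - avec m t1 t2 t3 2))^3"
    "delta m q 1 3 = (k * A) ^ 3 * (norm (avec m t1 t2 t3 1 - avec m t1 t2 t3 3))^3"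
    "delta m q 2 3 = (k * A) ^ 3 * (norm (avec m t1 t2 t3 2 - avec m t1 t2 t3 3))^3"
    using alpha_pos unfolding side_lengths by (simp_all add: power_mult_distrib power_divide)
qed

lemma mu_pos:
  assumes "delta m q 1 2 > 0" "delta m q 1 3 > 0" "delta m q 2 3 > 0"
  shows "mu m q t1 t2 t3 > 0"
  unfolding mu_def sum_over_pairs using assms m_pos side_lengths_pos
  by (intro add_pos_pos divide_pos_pos mult_pos_pos)

end

section \<open>The potential and the Hamiltonian\<close>

lemma Upot_zero_w: "Upot m q t1 t2 t3 z 0 = mu m q t1 t2 t3 / norm z"
proof -
  have "norm ((Amat m t1 t2 t3 i - Amat m t1 t2 t3 j) *v z)
      = norm (avec m t1 t2 t3 i - avec m t1 t2 t3 j) * norm z" for i j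
    unfolding norm_cvec[symmetric] cvec_Amat_diff by (simp add: norm_mult)
  then show ?thesis
    unfolding Upot_def mu_def sum_over_pairs by (simp add: add_divide_distrib)
qed

context central_configuration
begin

lemma Upot_critical_in_w:
  defines "n \<equiv> \<lambda>i j. norm (avec m t1 t2 t3 i - avec m t1 t2 t3 j)"
  assumes s_pos: "s > 0"
    and delta_cube: "delta m q 1 2 = \<kappa> * (n 1 2)^3" "delta m q 1 3 = \<kappa> * (n 1 3)^3"
      "delta m q 2 3 = \<kappa> * (n 2 3)^3"
  shows "((\<lambda>w. Upot m q t1 t2 t3 (vec2 s 0) w) has_derivative (\<lambda>v. 0)) (at 0)"
proof -
  define d where "d i j = (Amat m t1 t2 t3 i - Amat m t1 t2 t3 j) *v vec2 s 0" for i j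
  define E where "E i j = Bmat m t1 t2 t3 i - Bmat m t1 t2 t3 j" for i j
  define c where "c i j = m i * m j * delta m q i j" for i j
  have sides_pos: "n 1 2 > 0" "n 1 3 > 0" "n 2 3 > 0"
    unfolding n_def by (fact side_lengths_pos)+
  have norm_d: "norm (d i j) = s * n i j" for i j
    unfolding d_def n_def norm_cvec[symmetric] cvec_Amat_diff using s_pos
    by (simp add: norm_mult flip: complex_of_real_def)
  have d_nz: "d i j \<noteq> 0" if "n i j > 0" for i j
    using norm_d[of i j] that s_pos by auto
  have pair_term: "- c i j * (d i j \<bullet> (E i j *v v)) / norm (d i j) ^ 3
      = - \<kappa> / s\<^sup>2 * Re ((m i * m j) *\<^sub>R (cnj (a i - a j) * (b i - b j)) * cvec v)"
    if "n i j > 0" "delta m q i j = \<kappa> * (n i j)^3" for i j v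
  proof -
    define X where "X = Re (cnj (a i - a j) * (b i - b j) * cvec v)"
    have inner: "d i j \<bullet> (E i j *v v) = s * X"
      unfolding X_def inner_cvec d_def E_def cvec_Amat_diff cvec_Bmat_diff by (simp add: algebra_simps)
    have re: "Re ((m i * m j) *\<^sub>R (cnj (a i - a j) * (b i - b j)) * cvec v) = m i * m j * X"
      unfolding X_def by (simp add: scaleR_conv_of_real mult.assoc)
    show ?thesis
      unfolding norm_d c_def inner re using that s_pos
      by (simp add: field_simps power3_eq_cube power2_eq_square)
  qed
  have "((\<lambda>w. \<Sum>(i, j)\<in>{(1, 2), (1, 3), (2, 3)}. c i j / norm (d i j + E i j *v w)) has_derivative
      (\<lambda>v. \<Sum>(i, j)\<in>{(1, 2), (1, 3), (2, 3)}. - c i j * (d i j \<bullet> (E i j *v v)) / norm (d i j) ^ 3)) (at 0)"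
    using has_derivative_inverse_norm_affine[OF matrix_vector_mul_bounded_linear, of "d i j" "E i j" 0 "c i j" for i j]
      d_nz sides_pos
    by (intro has_derivative_sum) auto
  moreover have "(\<Sum>(i, j)\<in>{(1, 2), (1, 3), (2, 3)}. - c i j * (d i j \<bullet> (E i j *v v)) / norm (d i j) ^ 3) = 0" for v
  proof -
    note re_sum = arg_cong[OF pair_orthogonal, of "\<lambda>x. Re (x * cvec v)",
        unfolded sum_over_pairs distrib_right plus_complex.sel mult_zero_left zero_complex.sel]
    show ?thesis
      unfolding sum_over_pairs pair_term[OF sides_pos(1) delta_cube(1)]
        pair_term[OF sides_pos(2) delta_cube(2)] pair_term[OF sides_pos(3) delta_cube(3)]
        distrib_left[symmetric] re_sum
      by simp
  qed
  ultimately show ?thesis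
    unfolding Upot_def c_def d_def E_def by simp
qed

end

lemma sigma_pos_pow4:
  assumes "mu m q t1 t2 t3 * p > 0"
  shows "sigma m q t1 t2 t3 p > 0" "sigma m q t1 t2 t3 p ^ 4 = mu m q t1 t2 t3 * p"
    "sqrt (mu m q t1 t2 t3 * p) = (sigma m q t1 t2 t3 p)\<^sup>2"
proof -
  show s_pos: "sigma m q t1 t2 t3 p > 0" unfolding sigma_def powr_gt_zero using assms by linarith
  have "sigma m q t1 t2 t3 p ^ 4 = sigma m q t1 t2 t3 p powr (real 4)"
    using s_pos by (simp add: powr_realpow)
  also have "\<dots> = (mu m q t1 t2 t3 * p) powr 1" unfolding sigma_def powr_powr by simp
  also have "\<dots> = mu m q t1 t2 t3 * p" using assms by simp
  finally show s4: "sigma m q t1 t2 t3 p ^ 4 = mu m q t1 t2 t3 * p" .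
  show "sqrt (mu m q t1 t2 t3 * p) = (sigma m q t1 t2 t3 p)\<^sup>2"
    unfolding s4[symmetric] by (simp add: real_sqrt_unique flip: power_mult)
qed

lemma Ham_equilibrium_solution:
  fixes m q :: "nat \<Rightarrow> real" and t1 t2 t3 p e s :: real
  assumes s_pos: "s > 0" and "p > 0" and sigma_eq: "sigma m q t1 t2 t3 p = s"
    and mu_eq_pow4: "mu m q t1 t2 t3 * p = s ^ 4"
    and Uw: "((\<lambda>w. Upot m q t1 t2 t3 (vec2 s 0) w) has_derivative (\<lambda>v. 0)) (at 0)"
  shows "hamiltonian_solution (Ham m q t1 t2 t3 p e) (\<lambda>_. vec2 0 s) (\<lambda>_. 0) (\<lambda>_. vec2 s 0) (\<lambda>_. 0)"
  unfolding hamiltonian_solution_def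
proof (intro allI exI[of _ 0] conjI has_vector_derivative_const)
  fix \<theta>
  note derivative_rules = derivative_eq_intros has_derivative_matrix_vector_mult
    has_derivative_ident has_derivative_const refl
  show "((\<lambda>Z. Ham m q t1 t2 t3 p e \<theta> Z 0 (vec2 s 0) 0) has_derivative (\<lambda>v. 0 \<bullet> v)) (at (vec2 0 s))"
    unfolding Ham_def power2_norm_eq_inner
    by (rule has_derivative_eq_rhs, (rule derivative_rules)+)
      (simp add: inner_vec2 Jm_def mat2_def[symmetric])
  show "((\<lambda>W. Ham m q t1 t2 t3 p e \<theta> (vec2 0 s) W (vec2 s 0) 0) has_derivative (\<lambda>v. 0 \<bullet> v)) (at 0)"
    unfolding Ham_def power2_norm_eq_inner
    by (rule has_derivative_eq_rhs, (rule derivative_rules)+) (simp add: inner_vec2 Jm_def)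
  show "((\<lambda>w. Ham m q t1 t2 t3 p e \<theta> (vec2 0 s) 0 (vec2 s 0) w) has_derivative (\<lambda>v. - (0 \<bullet> v))) (at 0)"
    unfolding Ham_def power2_norm_eq_inner
    by (rule has_derivative_eq_rhs, (rule derivative_rules Uw)+) (simp add: inner_vec2 Jm_def)
  have norm_z0: "norm (vec2 s 0) = s" and z0_nz: "vec2 s 0 \<noteq> 0"
    using s_pos by (simp_all add: norm_vec_def L2_set_def sum_2 vec_eq_iff forall_2)
  have mu_eq: "mu m q t1 t2 t3 = s ^ 4 / p" using mu_eq_pow4 \<open>p > 0\<close> by (simp add: field_simps)
  have inverse_norm: "((\<lambda>z. c / norm z) has_derivative (\<lambda>v. - c * (vec2 s 0 \<bullet> v) / norm (vec2 s 0) ^ 3)) (at (vec2 s 0))"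
    for c using has_derivative_inverse_norm_affine[OF bounded_linear_ident, of 0 "vec2 s 0" c] z0_nz by simp
  show "((\<lambda>z. Ham m q t1 t2 t3 p e \<theta> (vec2 0 s) 0 z 0) has_derivative (\<lambda>v. - (0 \<bullet> v))) (at (vec2 s 0))"
    unfolding Ham_def power2_norm_eq_inner Upot_zero_w sigma_eq
    by (rule has_derivative_eq_rhs, (rule inverse_norm derivative_rules)+)
      (use s_pos \<open>p > 0\<close> in \<open>simp add: inner_vec2 Jm_def norm_z0 mu_eq field_simps
        power3_eq_cube power4_eq_xxxx\<close>)
qed

section \<open>The elliptic triangle solution\<close>

lemma Qtri_eq_Amat:
  assumes "\<And>t. zK t = r t *\<^sub>R vec2 (cos (ang t)) (sin (ang t))"
  shows "Qtri m t1 t2 t3 r ang i t = Amat m t1 t2 t3 i *v zK t"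
  unfolding cvec_eq_iff[symmetric] Qtri_def assms by (simp add: cvec_Amat cvec_rot cis.ctr)

lemma Ptri_eq_Amat:
  assumes "\<And>t. zK t = r t *\<^sub>R vec2 (cos (ang t)) (sin (ang t))"
    and "\<And>t. (zK has_vector_derivative zK' t) (at t)"
  shows "Ptri m t1 t2 t3 r ang i t = m i *\<^sub>R (Amat m t1 t2 t3 i *v zK' t)"
proof -
  have "(Qtri m t1 t2 t3 r ang i has_vector_derivative Amat m t1 t2 t3 i *v zK' t) (at t)"
    unfolding Qtri_eq_Amat[OF assms(1), abs_def]
    by (rule bounded_linear.has_vector_derivative[OF matrix_vector_mul_bounded_linear assms(2)])
  then show ?thesis unfolding Ptri_def by (simp add: vector_derivative_at)
qed

lemma pulsating_coordinates:
  fixes zK Z :: "real^2" and r r' \<theta> s :: real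
  assumes polar: "zK = r *\<^sub>R vec2 (cos \<theta>) (sin \<theta>)" and "r > 0" "s > 0"
    and radial: "r * r' = zK \<bullet> Z" and angular: "cross2 zK Z = s\<^sup>2"
  shows "(1 / s) *\<^sub>R (r *\<^sub>R (transpose (rot \<theta>) *v Z) - r' *\<^sub>R (transpose (rot \<theta>) *v zK)) = vec2 0 s"
    "s *\<^sub>R ((1 / r) *\<^sub>R (transpose (rot \<theta>) *v zK)) = vec2 s 0"
proof -
  have z: "cvec zK = of_real r * cis \<theta>" unfolding polar by (simp add: cis.ctr)
  have "cnj (cvec zK) * cvec Z = Complex (r * r') (s\<^sup>2)"
    using radial angular by (simp add: complex_eq_iff inner_cvec cross2_cvec)
  then have Z: "of_real r * (cnj (cis \<theta>) * cvec Z) = Complex (r * r') (s\<^sup>2)"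
    unfolding z by (simp add: ac_simps)
  have zK: "cnj (cis \<theta>) * cvec zK = of_real r"
    unfolding z by (simp add: cis_cnj mult.left_commute cis_mult)
  show "(1 / s) *\<^sub>R (r *\<^sub>R (transpose (rot \<theta>) *v Z) - r' *\<^sub>R (transpose (rot \<theta>) *v zK)) = vec2 0 s"
    "s *\<^sub>R ((1 / r) *\<^sub>R (transpose (rot \<theta>) *v zK)) = vec2 s 0"
    unfolding cvec_eq_iff[symmetric] cvec_simps cvec_transpose_rot Z zK
    using \<open>r > 0\<close> \<open>s > 0\<close> by (simp_all add: complex_eq_iff power2_eq_square)
qed

theorem proposition3p2:
  fixes m q :: "nat \<Rightarrow> real"
    and t1 t2 t3 e p :: real
    and r r' ang :: "real \<Rightarrow> real"
    and zK zK' :: "real \<Rightarrow> real^2"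
  assumes m_pos: "m 1 > 0" "m 2 > 0" "m 3 > 0"
    and m_sum: "m 1 + m 2 + m 3 = 1"
    and delta_pos: "delta m q 1 2 > 0" "delta m q 2 3 > 0" "delta m q 3 1 > 0"
    and tri: "root 3 (delta m q 1 2) + root 3 (delta m q 2 3) > root 3 (delta m q 3 1)"
             "root 3 (delta m q 2 3) + root 3 (delta m q 3 1) > root 3 (delta m q 1 2)"
             "root 3 (delta m q 3 1) + root 3 (delta m q 1 2) > root 3 (delta m q 2 3)"
    and angles: "t1 > 0" "t2 > 0" "t3 > 0" "t1 + t2 + t3 = pi"
    and sines: "sin t1 * root 3 (delta m q 3 1) = sin t2 * root 3 (delta m q 2 3)"
               "sin t2 * root 3 (delta m q 1 2) = sin t3 * root 3 (delta m q 3 1)"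
    and ecc: "0 \<le> e" "e < 1"
    and par: "p > 0"
    and kepler_polar: "\<And>t. zK t = r t *\<^sub>R vec2 (cos (ang t)) (sin (ang t))"
    and kepler_vel: "\<And>t. (zK has_vector_derivative zK' t) (at t)"
    and kepler_acc: "\<And>t. (zK' has_vector_derivative
                        (- (mu m q t1 t2 t3 / (norm (zK t))^3)) *\<^sub>R zK t) (at t)"
    and conic: "\<And>t. r t = p / (1 + e * cos (ang t))"
    and r_deriv: "\<And>t. (r has_real_derivative r' t) (at t)"
    and anomaly: "continuous_on UNIV ang" "strict_mono ang"
  shows "(\<forall>vth. \<exists>t. ang t = vth) \<and>
    (\<forall>t.
      (\<exists>g z w. \<forall>i\<in>{1,2,3}. calA_act m t1 t2 t3 g z w i = Qtri m t1 t2 t3 r ang i t) \<and>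
      (\<forall>g z w. (\<forall>i\<in>{1,2,3}. calA_act m t1 t2 t3 g z w i = Qtri m t1 t2 t3 r ang i t) \<longrightarrow>
        (case calAT_act m t1 t2 t3 (\<lambda>i. Ptri m t1 t2 t3 r ang i t) of (G, Z, W) \<Rightarrow>
          let s = sigma m q t1 t2 t3 p;
              zt = transpose (rot (ang t)) *v z; Zt = transpose (rot (ang t)) *v Z;
              wt = transpose (rot (ang t)) *v w; Wt = transpose (rot (ang t)) *v W;
              zh = (1 / r t) *\<^sub>R zt; Zh = r t *\<^sub>R Zt - r' t *\<^sub>R zt;
              wh = (1 / r t) *\<^sub>R wt; Wh = r t *\<^sub>R Wt - r' t *\<^sub>R wt
          in G = 0 \<and> g = 0 \<and>
             (1 / s) *\<^sub>R Zh = vec2 0 s \<and> (1 / s) *\<^sub>R Wh = 0 \<and>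
             s *\<^sub>R zh = vec2 s 0 \<and> s *\<^sub>R wh = 0))) \<and>
    hamiltonian_solution (Ham m q t1 t2 t3 p e)
      (\<lambda>_. vec2 0 (sigma m q t1 t2 t3 p)) (\<lambda>_. 0) (\<lambda>_. vec2 (sigma m q t1 t2 t3 p) 0) (\<lambda>_. 0)"
proof -
  interpret config: central_configuration m t1 t2 t3
    using m_pos m_sum angles by unfold_locales
  define s where "s = sigma m q t1 t2 t3 p"
  obtain \<kappa> where delta_cube: "delta m q 1 2 = \<kappa> * (norm (avec m t1 t2 t3 1 - avec m t1 t2 t3 2))^3"
    "delta m q 1 3 = \<kappa> * (norm (avec m t1 t2 t3 1 - avec m t1 t2 t3 3))^3"
    "delta m q 2 3 = \<kappa> * (norm (avec m t1 t2 t3 2 - avec m t1 t2 t3 3))^3"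
    using config.delta_proportional_to_cubed_sides[OF sines] by blast
  have mu_pos: "mu m q t1 t2 t3 > 0"
    using config.mu_pos delta_pos by (simp add: delta_def mult.commute)
  interpret orbit: elliptic_kepler_orbit zK zK' r r' ang "mu m q t1 t2 t3" p e
    using kepler_polar kepler_vel kepler_acc conic r_deriv ecc par mu_pos anomaly by unfold_locales
  have "mu m q t1 t2 t3 * p > 0" using mu_pos par by simp
  note s_facts = sigma_pos_pow4[OF this, folded s_def]
  have coordinates: "(1 / s) *\<^sub>R (r t *\<^sub>R (transpose (rot (ang t)) *v zK' t)
        - r' t *\<^sub>R (transpose (rot (ang t)) *v zK t)) = vec2 0 s"
      "s *\<^sub>R ((1 / r t) *\<^sub>R (transpose (rot (ang t)) *v zK t)) = vec2 s 0" for t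
    using pulsating_coordinates[OF kepler_polar orbit.radius_pos s_facts(1) orbit.radial_velocity]
      orbit.angular_momentum s_facts(3) by simp_all
  have "hamiltonian_solution (Ham m q t1 t2 t3 p e) (\<lambda>_. vec2 0 s) (\<lambda>_. 0) (\<lambda>_. vec2 s 0) (\<lambda>_. 0)"
    using Ham_equilibrium_solution[OF s_facts(1) par s_def[symmetric] s_facts(2)[symmetric]]
      config.Upot_critical_in_w[OF s_facts(1) delta_cube] by blast
  then show ?thesis
    unfolding Qtri_eq_Amat[OF kepler_polar] config.calA_act_eq_Amat_iff
      Ptri_eq_Amat[OF kepler_polar kepler_vel] config.calAT_act_Amat_momenta
    using orbit.anomaly_surj coordinates by (simp add: Let_def s_def[symmetric])
qed

end
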